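(* Let $A=\mathbb{Z}_{2^{m_1}}\times \mathbb{Z}_{2^{m_2}}\times\cdots\times\mathbb{Z}_{2^{m_k}}\times A_{2'}$, where $k\ge 1$, $m_i\ge 1$ for each $1\le i\le k$, and $A_{2'}$ is a finite abelian group of odd order. Let $H$ be a subgroup of $A$. Then $H$ is a subgroup perfect code of $A$ if and only if either $H$ is a subgroup isomorphic to $$\mathbb{Z}_{2^{m_1-1}}\times \mathbb{Z}_{2^{m_2-1}}\times\cdots\times\mathbb{Z}_{2^{m_k-1}}\times A_{2'},$$ or $H$ contains an element that is not a square in $A$.
   Context: All groups are finite abelian, written additively with identity $0$. An element $x$ of $A$ is a square if $x=2y$ for some $y\in A$; a subset of $A$ is square-free if it contains no squares. For a square-free subset $T\subseteq A$, the Cayley sum graph $\mathrm{CayS}(A,T)$ is the simple graph with vertex set $A$ in which two distinct vertices $x,y$ are adjacent iff $x+y\in T$. A subset $C$ of the vertex set of a graph is a perfect code if every vertex is at distance at most one from exactly one vertex of $C$. A subgroup $H$ of $A$ is a subgroup perfect code of $A$ if $H$ is a perfect code of $\mathrm{CayS}(A,T)$ for some square-free subset $T\subseteq A$ (the empty set allowed). *)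

theory Defs
  imports "HOL-Algebra.Algebra"
begin

text \<open>Abelian groups are HOL-Algebra groups (written multiplicatively: the paper's
  x + y is x \<otimes> y, 0 is \<one>, and 2y is y \<otimes> y).\<close>

definition is_square :: "('a, 'b) monoid_scheme \<Rightarrow> 'a \<Rightarrow> bool" where
  "is_square G x \<longleftrightarrow> (\<exists>y\<in>carrier G. x = y \<otimes>\<^bsub>G\<^esub> y)"

definition square_free :: "('a, 'b) monoid_scheme \<Rightarrow> 'a set \<Rightarrow> bool" where
  "square_free G T \<longleftrightarrow> (\<forall>x\<in>T. \<not> is_square G x)"

definition cays_adj :: "('a, 'b) monoid_scheme \<Rightarrow> 'a set \<Rightarrow> 'a \<Rightarrow> 'a \<Rightarrow> bool" where
  "cays_adj G T x y \<longleftrightarrow> x \<in> carrier G \<and> y \<in> carrier G \<and> x \<noteq> y \<and> x \<otimes>\<^bsub>G\<^esub> y \<in> T"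

definition cays_perfect_code :: "('a, 'b) monoid_scheme \<Rightarrow> 'a set \<Rightarrow> 'a set \<Rightarrow> bool" where
  "cays_perfect_code G T C \<longleftrightarrow> C \<subseteq> carrier G \<and>
     (\<forall>v\<in>carrier G. \<exists>!c. c \<in> C \<and> (v = c \<or> cays_adj G T v c))"

definition subgroup_perfect_code :: "('a, 'b) monoid_scheme \<Rightarrow> 'a set \<Rightarrow> bool" where
  "subgroup_perfect_code G H \<longleftrightarrow> subgroup H G \<and>
     (\<exists>T. T \<subseteq> carrier G \<and> square_free G T \<and> cays_perfect_code G T H)"

end

theory Submission
  imports Defs
begin

text \<open>
  If every element of a subgroup H is a square, H can only be a perfect code when it contains
  all squares: a square s outside H would be dominated by some c in H through the edge label
  s + c, which is again a square. Conversely H is a perfect code as soon as every coset x + H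
  outside H contains a non-square: choosing one such element t(x + H) per coset as connection
  set, a vertex v outside H is adjacent to exactly one c in H, namely the one with
  v + c = t(v + H). The group of squares has this property, and so has every subgroup
  containing a non-square h (then either x or x + h is a non-square).

  For A = Z(2^m1) x ... x Z(2^mk) x A', with A' of odd order, squaring is a bijection of A',
  so the group of squares is 2Z(2^m1) x ... x 2Z(2^mk) x A', which is isomorphic to
  Z(2^(m1-1)) x ... x Z(2^(mk-1)) x A'. A subgroup of it of the same order is all of it.
\<close>

definition squares :: "('a, 'b) monoid_scheme \<Rightarrow> 'a set" where
  "squares G = (\<lambda>y. y \<otimes>\<^bsub>G\<^esub> y) ` carrier G"

lemma is_square_iff_mem_squares: "is_square G x \<longleftrightarrow> x \<in> squares G"
  by (auto simp: is_square_def squares_def)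

lemma (in group) square_inj_on_odd_order:
  assumes "odd (order G)"
  shows "inj_on (\<lambda>x. x \<otimes> x) (carrier G)"
proof (rule inj_onI)
  have root: "x = (x \<otimes> x) [^] (order G div 2 + 1)" if x: "x \<in> carrier G" for x
  proof -
    have "x \<otimes> x = x [^] (2::nat)"
      using x by (simp add: numeral_2_eq_2)
    then have "(x \<otimes> x) [^] (order G div 2 + 1) = x [^] (2 * (order G div 2 + 1))"
      by (simp only: nat_pow_pow[OF x])
    also have "2 * (order G div 2 + 1) = order G + 1"
      using assms by presburger
    also have "x [^] (order G + 1) = x"
      using x by (simp add: pow_order_eq_1)
    finally show ?thesis by simp
  qed
  fix x y
  assume "x \<in> carrier G" "y \<in> carrier G" "x \<otimes> x = y \<otimes> y"
  then show "x = y" using root by metis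
qed

context comm_group
begin

lemma square_mult_square:
  "y \<in> carrier G \<Longrightarrow> z \<in> carrier G \<Longrightarrow> (y \<otimes> y) \<otimes> (z \<otimes> z) = (y \<otimes> z) \<otimes> (y \<otimes> z)"
  by (metis m_assoc m_closed m_comm)

lemma square_mult_nonsquare:
  assumes s: "s \<in> squares G" and x: "x \<in> carrier G" "\<not> is_square G x"
  shows "\<not> is_square G (s \<otimes> x)"
proof
  assume "is_square G (s \<otimes> x)"
  then obtain z where z: "z \<in> carrier G" "s \<otimes> x = z \<otimes> z"
    by (auto simp: is_square_def)
  obtain y where y: "y \<in> carrier G" "s = y \<otimes> y"
    using s by (auto simp: squares_def)
  have "x = (z \<otimes> z) \<otimes> (inv y \<otimes> inv y)"
    using x(1) y z by (metis inv_mult_group m_closed inv_closed r_inv r_one m_assoc m_comm)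
  also have "\<dots> = (z \<otimes> inv y) \<otimes> (z \<otimes> inv y)"
    using square_mult_square[OF z(1) inv_closed[OF y(1)]] .
  finally show False
    using x z(1) y(1) by (auto simp: is_square_def)
qed

lemma subgroup_perfect_code_subset_squares_eq:
  assumes "subgroup_perfect_code G H" "H \<subseteq> squares G"
  shows "H = squares G"
proof
  from assms(1) obtain T where "square_free G T" "cays_perfect_code G T H"
    unfolding subgroup_perfect_code_def by blast
  show "squares G \<subseteq> H"
  proof
    fix s assume "s \<in> squares G"
    then obtain y where y: "y \<in> carrier G" "s = y \<otimes> y"
      by (auto simp: squares_def)
    show "s \<in> H"
    proof (rule ccontr)
      assume "s \<notin> H"
      moreover obtain c where "c \<in> H" "s = c \<or> cays_adj G T s c"
        using \<open>cays_perfect_code G T H\<close> y unfolding cays_perfect_code_def by blast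
      ultimately have "c \<in> H" "s \<otimes> c \<in> T"
        by (auto simp: cays_adj_def)
      moreover obtain z where "z \<in> carrier G" "c = z \<otimes> z"
        using assms(2) \<open>c \<in> H\<close> by (auto simp: squares_def)
      ultimately have "(y \<otimes> z) \<otimes> (y \<otimes> z) \<in> T"
        using y square_mult_square by metis
      then show False
        using \<open>square_free G T\<close> m_closed[OF y(1) \<open>z \<in> carrier G\<close>]
        unfolding square_free_def is_square_def by blast
    qed
  qed
qed (fact assms(2))

lemma cays_perfect_code_if_transversal:
  assumes H: "subgroup H G" and T: "T \<inter> H = {}"
    and transversal: "\<And>x. x \<in> carrier G - H \<Longrightarrow> \<exists>!t. t \<in> T \<inter> (x <# H)"
  shows "cays_perfect_code G T H"
  unfolding cays_perfect_code_def
proof (intro conjI ballI)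
  show "H \<subseteq> carrier G"
    using H by (rule subgroup.subset)
  fix v assume v: "v \<in> carrier G"
  show "\<exists>!c. c \<in> H \<and> (v = c \<or> cays_adj G T v c)"
  proof (cases "v \<in> H")
    case True
    then have "\<not> cays_adj G T v c" if "c \<in> H" for c
      using T subgroup.m_closed[OF H True that] by (auto simp: cays_adj_def)
    then show ?thesis using True by blast
  next
    case False
    have adj: "v = c \<or> cays_adj G T v c \<longleftrightarrow> v \<otimes> c \<in> T" if "c \<in> H" for c
      using that False v subgroup.mem_carrier[OF H] by (auto simp: cays_adj_def)
    obtain t where t: "t \<in> T \<inter> (v <# H)" and t_unique: "\<And>t'. t' \<in> T \<inter> (v <# H) \<Longrightarrow> t' = t"
      using transversal v False by blast
    obtain c where c: "c \<in> H" "t = v \<otimes> c"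
      using t by (auto simp: l_coset_def)
    have "c' = c" if "c' \<in> H" "v \<otimes> c' \<in> T" for c'
    proof -
      have "v \<otimes> c' = v \<otimes> c"
        using t_unique[of "v \<otimes> c'"] that c by (auto simp: l_coset_def)
      then show ?thesis
        using v that(1) c(1) subgroup.mem_carrier[OF H] by auto
    qed
    then show ?thesis
      using adj c t by blast
  qed
qed

lemma subgroup_perfect_codeI:
  assumes H: "subgroup H G"
    and nonsquare: "\<And>x. x \<in> carrier G - H \<Longrightarrow> \<exists>t\<in>x <# H. \<not> is_square G t"
  shows "subgroup_perfect_code G H"
proof -
  define pick where "pick C = (SOME t. t \<in> C \<and> \<not> is_square G t)" for C
  have pick: "pick (x <# H) \<in> x <# H" "\<not> is_square G (pick (x <# H))"
    if "x \<in> carrier G - H" for x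
    using someI_ex[OF nonsquare[OF that, unfolded Bex_def]] by (auto simp: pick_def)
  have coset_outside: "t \<notin> H" "t <# H = x <# H"
    if "x \<in> carrier G - H" "t \<in> x <# H" for x t
  proof -
    show "t <# H = x <# H"
      using l_repr_independence[OF that(2) _ H] that(1) by simp
    show "t \<notin> H"
      using l_coset_swap[OF that(2) _ H] that(1) subgroup.m_closed[OF H]
      by (auto simp: l_coset_def)
  qed
  define T where "T = (\<lambda>x. pick (x <# H)) ` (carrier G - H)"
  have "T \<inter> H = {}"
    using pick(1) coset_outside(1) by (auto simp: T_def)
  moreover have "\<exists>!t. t \<in> T \<inter> (x <# H)" if x: "x \<in> carrier G - H" for x
  proof
    show "pick (x <# H) \<in> T \<inter> (x <# H)"
      using x pick(1) by (auto simp: T_def)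
  next
    fix t assume "t \<in> T \<inter> (x <# H)"
    then obtain y where y: "y \<in> carrier G - H" "t = pick (y <# H)" "t \<in> x <# H"
      by (auto simp: T_def)
    then have "y <# H = x <# H"
      using coset_outside(2) pick(1) x by metis
    then show "t = pick (x <# H)"
      using y(2) by simp
  qed
  ultimately have "cays_perfect_code G T H"
    by (rule cays_perfect_code_if_transversal[OF H])
  moreover have "T \<subseteq> carrier G"
    using pick(1) l_coset_carrier[OF _ _ H] unfolding T_def by blast
  moreover have "square_free G T"
    using pick(2) unfolding T_def square_free_def by blast
  ultimately show ?thesis
    using H unfolding subgroup_perfect_code_def by blast
qed

theorem subgroup_perfect_code_iff:
  assumes H: "subgroup H G"
  shows "subgroup_perfect_code G H \<longleftrightarrow> H = squares G \<or> (\<exists>h\<in>H. \<not> is_square G h)"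
proof
  assume "subgroup_perfect_code G H"
  then show "H = squares G \<or> (\<exists>h\<in>H. \<not> is_square G h)"
    using subgroup_perfect_code_subset_squares_eq by (auto simp: is_square_iff_mem_squares)
next
  assume H_cases: "H = squares G \<or> (\<exists>h\<in>H. \<not> is_square G h)"
  show "subgroup_perfect_code G H"
  proof (rule subgroup_perfect_codeI[OF H])
    fix x assume x: "x \<in> carrier G - H"
    show "\<exists>t\<in>x <# H. \<not> is_square G t"
    proof (cases "is_square G x")
      case False
      then show ?thesis
        using lcos_self[OF _ H] x by blast
    next
      case True
      then obtain h where h: "h \<in> H" "\<not> is_square G h"
        using H_cases x by (auto simp: is_square_iff_mem_squares)
      have "\<not> is_square G (x \<otimes> h)"
        by (rule square_mult_nonsquare)
          (use True h subgroup.mem_carrier[OF H] in \<open>auto simp: is_square_iff_mem_squares\<close>)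
      then show ?thesis
        using h(1) by (auto simp: l_coset_def)
    qed
  qed
qed

end

lemma double_mod_power2:
  fixes a :: int
  assumes "1 \<le> n"
  shows "(2 * a) mod 2 ^ n = 2 * (a mod 2 ^ (n - 1))"
proof -
  have "(2::int) ^ n = 2 * 2 ^ (n - 1)"
    using assms by (cases n) auto
  then show ?thesis
    by (simp add: mod_mult_mult1)
qed

locale cyclic_2groups_times_odd =
  fixes I :: "nat set" and m :: "nat \<Rightarrow> nat" and B :: "('b, 'c) monoid_scheme"
  assumes finite_I: "finite I" and m_pos: "\<And>i. i \<in> I \<Longrightarrow> 1 \<le> m i"
    and comm_group_B: "comm_group B" and finite_B: "finite (carrier B)"
    and odd_order_B: "odd (order B)"
begin

sublocale B: comm_group B
  by (fact comm_group_B)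

abbreviation A where
  "A \<equiv> DirProd (product_group I (\<lambda>i. integer_mod_group (2 ^ m i))) B"

abbreviation A_half where
  "A_half \<equiv> DirProd (product_group I (\<lambda>i. integer_mod_group (2 ^ (m i - 1)))) B"

lemma carrier_A: "carrier A = (\<Pi>\<^sub>E i\<in>I. {0..<2 ^ m i}) \<times> carrier B"
  by (simp add: carrier_integer_mod_group)

lemma carrier_A_half: "carrier A_half = (\<Pi>\<^sub>E i\<in>I. {0..<2 ^ (m i - 1)}) \<times> carrier B"
  by (simp add: carrier_integer_mod_group)

lemma group_A_half: "group A_half"
  by (rule DirProd_group) (auto simp: B.is_group)

lemma comm_group_A: "comm_group A"
proof (rule group.group_comm_groupI)
  show "group A"
    by (rule DirProd_group) (auto simp: B.is_group)
  fix u v assume "u \<in> carrier A" "v \<in> carrier A"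
  then show "u \<otimes>\<^bsub>A\<^esub> v = v \<otimes>\<^bsub>A\<^esub> u"
    by (auto simp: B.m_comm add.commute)
qed

sublocale A: comm_group A
  by (fact comm_group_A)

lemma finite_carrier_A: "finite (carrier A)"
  unfolding carrier_A using finite_I finite_B by (simp add: finite_PiE)

lemma carrier_A_half_subset: "carrier A_half \<subseteq> carrier A"
proof -
  have "{0..<(2::int) ^ (m i - 1)} \<subseteq> {0..<2 ^ m i}" for i
    using power_increasing[of "m i - 1" "m i" "2::int"] by auto
  then show ?thesis
    unfolding carrier_A carrier_A_half by (intro Sigma_mono PiE_mono) auto
qed

lemma square_A: "(x, b) \<otimes>\<^bsub>A\<^esub> (x, b) = ((\<lambda>i\<in>I. 2 * (x i mod 2 ^ (m i - 1))), b \<otimes>\<^bsub>B\<^esub> b)"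
  using m_pos by (auto simp: double_mod_power2 intro!: restrict_ext)

definition reduce :: "(nat \<Rightarrow> int) \<times> 'b \<Rightarrow> (nat \<Rightarrow> int) \<times> 'b" where
  "reduce z = ((\<lambda>i\<in>I. fst z i mod 2 ^ (m i - 1)), snd z)"

lemma reduce_in_carrier: "z \<in> carrier A \<Longrightarrow> reduce z \<in> carrier A_half"
  by (auto simp: reduce_def carrier_integer_mod_group)

lemma square_reduce: "reduce z \<otimes>\<^bsub>A\<^esub> reduce z = z \<otimes>\<^bsub>A\<^esub> z"
  using m_pos by (cases z) (auto simp: reduce_def double_mod_power2 intro!: restrict_ext)

lemma mult_A_half: "y \<otimes>\<^bsub>A_half\<^esub> z = reduce (y \<otimes>\<^bsub>A\<^esub> z)"
proof -
  have "(a mod 2 ^ m i) mod 2 ^ (m i - 1) = a mod (2 ^ (m i - 1) :: int)" for a i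
    by (rule mod_mod_cancel) (simp add: le_imp_power_dvd)
  then show ?thesis
    by (cases y, cases z) (auto simp: reduce_def intro!: restrict_ext)
qed

lemma inj_on_square_A_half: "inj_on (\<lambda>z. z \<otimes>\<^bsub>A\<^esub> z) (carrier A_half)"
proof (rule inj_onI)
  fix u v assume "u \<in> carrier A_half" "v \<in> carrier A_half" "u \<otimes>\<^bsub>A\<^esub> u = v \<otimes>\<^bsub>A\<^esub> v"
  moreover obtain x b y c where uv: "u = (x, b)" "v = (y, c)"
    by (cases u, cases v)
  ultimately have x: "x \<in> (\<Pi>\<^sub>E i\<in>I. {0..<2 ^ (m i - 1)})" "b \<in> carrier B"
    and y: "y \<in> (\<Pi>\<^sub>E i\<in>I. {0..<2 ^ (m i - 1)})" "c \<in> carrier B"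
    and eq_2: "(\<lambda>i\<in>I. 2 * (x i mod 2 ^ (m i - 1))) = (\<lambda>i\<in>I. 2 * (y i mod 2 ^ (m i - 1)))"
    and eq_odd: "b \<otimes>\<^bsub>B\<^esub> b = c \<otimes>\<^bsub>B\<^esub> c"
    unfolding carrier_A_half by (simp_all only: square_A prod.inject mem_Sigma_iff)
  have "x = y"
  proof (rule PiE_ext[OF x(1) y(1)])
    fix i assume "i \<in> I"
    then have "x i \<in> {0..<2 ^ (m i - 1)}" "y i \<in> {0..<2 ^ (m i - 1)}"
      using x(1) y(1) by (auto dest: PiE_mem)
    then show "x i = y i"
      using fun_cong[OF eq_2, of i] \<open>i \<in> I\<close> by simp
  qed
  moreover have "b = c"
    using B.square_inj_on_odd_order[OF odd_order_B] x(2) y(2) eq_odd by (auto dest: inj_onD)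
  ultimately show "u = v"
    using uv by simp
qed

lemma A_half_iso_squares: "A_half \<cong> A\<lparr>carrier := squares A\<rparr>"
proof -
  let ?sq = "\<lambda>z. z \<otimes>\<^bsub>A\<^esub> z"
  have "?sq \<in> hom A_half (A\<lparr>carrier := squares A\<rparr>)"
  proof (rule homI)
    fix z assume "z \<in> carrier A_half"
    then show "?sq z \<in> carrier (A\<lparr>carrier := squares A\<rparr>)"
      using carrier_A_half_subset by (auto simp: squares_def)
  next
    fix y z assume "y \<in> carrier A_half" "z \<in> carrier A_half"
    then have "y \<in> carrier A" "z \<in> carrier A"
      using carrier_A_half_subset by auto
    have "?sq (y \<otimes>\<^bsub>A_half\<^esub> z) = ?sq (y \<otimes>\<^bsub>A\<^esub> z)"
      by (simp only: mult_A_half square_reduce)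
    also have "\<dots> = ?sq y \<otimes>\<^bsub>A\<^esub> ?sq z"
      by (rule A.square_mult_square[symmetric]) fact+
    finally show "?sq (y \<otimes>\<^bsub>A_half\<^esub> z) = ?sq y \<otimes>\<^bsub>A\<lparr>carrier := squares A\<rparr>\<^esub> ?sq z"
      by simp
  qed
  moreover have "?sq ` carrier A_half = squares A"
  proof
    show "?sq ` carrier A_half \<subseteq> squares A"
      using carrier_A_half_subset by (auto simp: squares_def)
    show "squares A \<subseteq> ?sq ` carrier A_half"
    proof
      fix s assume "s \<in> squares A"
      then obtain z where "z \<in> carrier A" "s = ?sq z"
        by (auto simp: squares_def)
      then have "s = ?sq (reduce z)"
        by (simp only: square_reduce)
      with reduce_in_carrier[OF \<open>z \<in> carrier A\<close>] show "s \<in> ?sq ` carrier A_half"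
        by (rule rev_image_eqI)
    qed
  qed
  ultimately show ?thesis
    using inj_on_square_A_half by (auto simp: is_iso_def iso_def bij_betw_def)
qed

lemma iso_A_half_iff_eq_squares:
  assumes "H \<subseteq> squares A"
  shows "A\<lparr>carrier := H\<rparr> \<cong> A_half \<longleftrightarrow> H = squares A"
proof
  assume "A\<lparr>carrier := H\<rparr> \<cong> A_half"
  then have "card H = card (squares A)"
    using iso_same_card[OF A_half_iso_squares] iso_same_card by fastforce
  moreover have "finite (squares A)"
    using finite_carrier_A by (simp add: squares_def)
  ultimately show "H = squares A"
    using card_subset_eq assms by blast
next
  assume "H = squares A"
  then show "A\<lparr>carrier := H\<rparr> \<cong> A_half"
    using group.iso_sym[OF group_A_half A_half_iso_squares] by simp
qed

end

theorem theorem3p1: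
  fixes k :: nat and m :: "nat \<Rightarrow> nat" and B :: "('b, 'c) monoid_scheme" and H
  assumes "k \<ge> 1"
    and "\<forall>i\<in>{1..k}. m i \<ge> 1"
    and "comm_group B" and "finite (carrier B)" and "odd (order B)"
    and "subgroup H (DirProd (product_group {1..k} (\<lambda>i. integer_mod_group (2 ^ m i))) B)"
  shows "subgroup_perfect_code
           (DirProd (product_group {1..k} (\<lambda>i. integer_mod_group (2 ^ m i))) B) H
         \<longleftrightarrow>
         ((DirProd (product_group {1..k} (\<lambda>i. integer_mod_group (2 ^ m i))) B)\<lparr>carrier := H\<rparr>
            \<cong> DirProd (product_group {1..k} (\<lambda>i. integer_mod_group (2 ^ (m i - 1)))) B)
         \<or> (\<exists>h\<in>H. \<not> is_square
                (DirProd (product_group {1..k} (\<lambda>i. integer_mod_group (2 ^ m i))) B) h)"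
proof -
  interpret cyclic_2groups_times_odd "{1..k}" m B
    by (rule cyclic_2groups_times_odd.intro) (use assms(2-5) in auto)
  have "subgroup_perfect_code A H \<longleftrightarrow> H = squares A \<or> (\<exists>h\<in>H. \<not> is_square A h)"
    using assms(6) by (rule A.subgroup_perfect_code_iff)
  moreover have "H = squares A \<longleftrightarrow> A\<lparr>carrier := H\<rparr> \<cong> A_half" if "\<forall>h\<in>H. is_square A h"
    using that iso_A_half_iff_eq_squares by (auto simp: is_square_iff_mem_squares)
  ultimately show ?thesis
    by blast
qed

end
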